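(* Let $(X,d_X)$ be a metric space, $\gamma\ge1$ and $d$ a positive integer with $\gamma_d(X)<\gamma<\infty$. Then for every $k\in\mathbb Z$, $X$ admits a $2^k$-bounded $\big(\frac1{100\gamma d^2},\frac1{d+1}\big)$-padded stochastic decomposition.
   Context: $X$ has Nagata dimension at most $d$ with constant $\gamma$ if for every $s>0$ there is a family $\mathscr C$ of nonempty subsets of $X$ covering $X$, with $\mathrm{diam}(C)\le\gamma s$ for all $C\in\mathscr C$, such that every $A\subseteq X$ with $\mathrm{diam}(A)\le s$ meets at most $d+1$ members of $\mathscr C$. $\gamma_d(X)$ is the infimum of such $\gamma$ ($\infty$ if none). For a partition $\mathscr P$ and $x\in X$, $\mathscr P(x)$ is the part containing $x$. A $\Delta$-bounded stochastic decomposition is a probability distribution over partitions of $X$ such that almost surely all parts have diameter $\le\Delta$; it is $(\varepsilon,\delta)$-padded if $\Pr[\mathscr P(x)\supseteq B_X(x,\varepsilon\Delta)]\ge\delta$ for every $x\in X$ ($B_X$ the closed ball). *)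

theory Defs
  imports "HOL-Probability.Probability"
begin

definition diam_le :: "'a::metric_space set \<Rightarrow> real \<Rightarrow> bool" where
  "diam_le A r \<longleftrightarrow> (\<forall>x\<in>A. \<forall>y\<in>A. dist x y \<le> r)"

definition nagata_dim_le :: "'a::metric_space set \<Rightarrow> nat \<Rightarrow> real \<Rightarrow> bool" where
  "nagata_dim_le X d g \<longleftrightarrow>
     (\<forall>s>0. \<exists>\<C>::'a set set.
        (\<forall>C\<in>\<C>. C \<noteq> {} \<and> C \<subseteq> X \<and> diam_le C (g * s)) \<and> X \<subseteq> \<Union>\<C> \<and>
        (\<forall>A\<subseteq>X. diam_le A s \<longrightarrow>
            finite {C\<in>\<C>. C \<inter> A \<noteq> {}} \<and> card {C\<in>\<C>. C \<inter> A \<noteq> {}} \<le> d + 1))"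

text \<open>gamma_d(X): infimum of admissible constants, \<infinity> if there is none.\<close>
definition nagata_const :: "'a::metric_space set \<Rightarrow> nat \<Rightarrow> ereal" where
  "nagata_const X d = (INF g\<in>{g. nagata_dim_le X d g}. ereal g)"

definition is_partition :: "'a set \<Rightarrow> 'a set set \<Rightarrow> bool" where
  "is_partition X P \<longleftrightarrow> (\<forall>C\<in>P. C \<noteq> {} \<and> C \<subseteq> X) \<and> \<Union>P = X \<and>
     (\<forall>C\<in>P. \<forall>D\<in>P. C \<noteq> D \<longrightarrow> C \<inter> D = {})"

definition part_of :: "'a set set \<Rightarrow> 'a \<Rightarrow> 'a set" where
  "part_of P x = (THE C. C \<in> P \<and> x \<in> C)"

definition stoch_decomp :: "'a::metric_space set \<Rightarrow> 'a set set measure \<Rightarrow> real \<Rightarrow> bool" where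
  "stoch_decomp X M \<Delta> \<longleftrightarrow> prob_space M \<and> (\<forall>P\<in>space M. is_partition X P) \<and>
     (AE P in M. \<forall>C\<in>P. diam_le C \<Delta>)"

definition padded :: "'a::metric_space set \<Rightarrow> 'a set set measure \<Rightarrow> real \<Rightarrow> real \<Rightarrow> real \<Rightarrow> bool" where
  "padded X M \<Delta> \<epsilon> \<delta> \<longleftrightarrow>
     (\<forall>x\<in>X. {P\<in>space M. cball x (\<epsilon> * \<Delta>) \<inter> X \<subseteq> part_of P x} \<in> sets M \<and>
             measure M {P\<in>space M. cball x (\<epsilon> * \<Delta>) \<inter> X \<subseteq> part_of P x} \<ge> \<delta>)"

end

theory Submission
  imports Defs
begin

text \<open>Take a Nagata cover \<open>\<C>\<close> at scale \<open>s \<approx> \<Delta>/(2\<gamma>)\<close>, so that its members have diameter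
  \<open>\<le> \<Delta>/2\<close> and every ball of radius \<open>s/2\<close> meets at most \<open>d + 1\<close> of them. For \<open>j = 0, \<dots>, d\<close>
  partition \<open>X\<close> by declaring two points equivalent when the same members of \<open>\<C>\<close> lie within
  distance \<open>(2j + 1)\<delta>\<close> of them, and choose \<open>j\<close> uniformly at random. Each part lies within
  \<open>(2d + 1)\<delta>\<close> of a common member of \<open>\<C>\<close>, so has diameter \<open>\<le> \<Delta>\<close>. Around a fixed \<open>x\<close> the number
  of members within distance \<open>2i\<delta>\<close> is nondecreasing in \<open>i = 0, \<dots>, d + 1\<close>, at least 1 and at most
  \<open>d + 1\<close>, so it is constant between some \<open>j\<close> and \<open>j + 1\<close>; for that \<open>j\<close> the whole ball of
  radius \<open>\<delta>\<close> around \<open>x\<close> lies in the part of \<open>x\<close>, which happens with probability \<open>\<ge> 1/(d + 1)\<close>.\<close>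

lemma exists_plateau:
  fixes f :: "nat \<Rightarrow> nat"
  assumes "f 0 \<ge> 1" "f (Suc d) \<le> d + 1" "\<And>i. i \<le> d \<Longrightarrow> f i \<le> f (Suc i)"
  shows "\<exists>j\<le>d. f j = f (Suc j)"
proof (rule ccontr)
  assume "\<not> ?thesis"
  hence strict: "\<And>j. j \<le> d \<Longrightarrow> f j < f (Suc j)"
    using assms(3) by (metis le_neq_implies_less)
  have "f i \<ge> f 0 + i" if "i \<le> Suc d" for i
    using that
  proof (induction i)
    case (Suc i)
    then show ?case using strict[of i] by simp
  qed simp
  from this[of "Suc d"] assms(1,2) show False by simp
qed

lemma diam_le_mono: "diam_le A r \<Longrightarrow> r \<le> r' \<Longrightarrow> diam_le A r'"
  unfolding diam_le_def by force

lemma part_of_eqI: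
  assumes "is_partition X P" "C \<in> P" "x \<in> C"
  shows "part_of P x = C"
  unfolding part_of_def
proof (rule the_equality)
  fix D assume "D \<in> P \<and> x \<in> D"
  thus "D = C" using assms unfolding is_partition_def by blast
qed (use assms in blast)

lemma measure_uniform_count_measure_ge:
  assumes "finite A" "B \<subseteq> A" "B \<noteq> {}" "card A \<le> n"
  shows "measure (uniform_count_measure A) B \<ge> 1 / real n"
proof -
  have "card B \<ge> 1" "card A > 0"
    using assms by (auto simp: Suc_le_eq card_gt_0_iff finite_subset)
  hence "1 / real n \<le> 1 / real (card A)"
    using assms(4) by (intro divide_left_mono) auto
  also have "\<dots> \<le> card B / card A"
    using \<open>card B \<ge> 1\<close> \<open>card A > 0\<close> by (intro divide_right_mono) auto
  finally show ?thesis
    using assms by (simp add: measure_uniform_count_measure)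
qed

definition near_members :: "'a::metric_space set set \<Rightarrow> 'a \<Rightarrow> real \<Rightarrow> 'a set set" where
  "near_members \<C> y t = {C\<in>\<C>. \<exists>c\<in>C. dist y c \<le> t}"

definition level_class :: "'a::metric_space set \<Rightarrow> 'a set set \<Rightarrow> real \<Rightarrow> 'a \<Rightarrow> 'a set" where
  "level_class X \<C> t y = {z\<in>X. near_members \<C> z t = near_members \<C> y t}"

definition level_partition :: "'a::metric_space set \<Rightarrow> 'a set set \<Rightarrow> real \<Rightarrow> 'a set set" where
  "level_partition X \<C> t = level_class X \<C> t ` X"

lemma near_members_mono: "t \<le> t' \<Longrightarrow> near_members \<C> y t \<subseteq> near_members \<C> y t'"
  unfolding near_members_def by force

lemma near_members_nonempty:
  assumes "X \<subseteq> \<Union>\<C>" "y \<in> X" "t \<ge> 0"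
  shows "near_members \<C> y t \<noteq> {}"
  using assms unfolding near_members_def by force

lemma is_partition_level_partition: "is_partition X (level_partition X \<C> t)"
  unfolding is_partition_def level_partition_def level_class_def by auto

lemma part_of_level_partition:
  "x \<in> X \<Longrightarrow> part_of (level_partition X \<C> t) x = level_class X \<C> t x"
  by (rule part_of_eqI[OF is_partition_level_partition])
    (auto simp: level_partition_def level_class_def)

lemma diam_le_level_class:
  assumes cover: "\<forall>C\<in>\<C>. diam_le C D" "X \<subseteq> \<Union>\<C>" and "t \<ge> 0"
  shows "diam_le (level_class X \<C> t y) (D + 2 * t)"
  unfolding diam_le_def
proof (intro ballI)
  fix a b assume "a \<in> level_class X \<C> t y" "b \<in> level_class X \<C> t y"
  hence "a \<in> X" and same: "near_members \<C> a t = near_members \<C> b t"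
    unfolding level_class_def by auto
  then obtain C where "C \<in> near_members \<C> a t" "C \<in> near_members \<C> b t"
    using near_members_nonempty[OF cover(2) _ \<open>t \<ge> 0\<close>] by blast
  then obtain ca cb where "C \<in> \<C>" "ca \<in> C" "cb \<in> C" "dist a ca \<le> t" "dist b cb \<le> t"
    unfolding near_members_def by auto
  moreover have "dist ca cb \<le> D"
    using cover(1) \<open>C \<in> \<C>\<close> \<open>ca \<in> C\<close> \<open>cb \<in> C\<close> unfolding diam_le_def by blast
  moreover have "dist a b \<le> dist a ca + dist ca cb + dist b cb"
    using dist_triangle[of a b ca] dist_triangle[of ca b cb] by (simp add: dist_commute)
  ultimately show "dist a b \<le> D + 2 * t" by linarith
qed

lemma finite_near_members:
  assumes "\<forall>C\<in>\<C>. C \<subseteq> X"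
    and mult: "\<forall>A\<subseteq>X. diam_le A s \<longrightarrow>
            finite {C\<in>\<C>. C \<inter> A \<noteq> {}} \<and> card {C\<in>\<C>. C \<inter> A \<noteq> {}} \<le> d + 1"
    and "2 * t \<le> s"
  shows "finite (near_members \<C> x t) \<and> card (near_members \<C> x t) \<le> d + 1"
proof -
  let ?A = "cball x t \<inter> X"
  have "diam_le ?A s" unfolding diam_le_def
  proof (intro ballI)
    fix a b assume "a \<in> ?A" "b \<in> ?A"
    hence "dist a x \<le> t" "dist x b \<le> t" by (auto simp: dist_commute)
    thus "dist a b \<le> s" using dist_triangle[of a b x] \<open>2 * t \<le> s\<close> by linarith
  qed
  moreover have "{C\<in>\<C>. C \<inter> ?A \<noteq> {}} = near_members \<C> x t"
    using assms(1) unfolding near_members_def by (fastforce simp: dist_commute)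
  ultimately show ?thesis using mult by auto
qed

lemma near_members_eq_of_plateau:
  assumes plateau: "near_members \<C> x (t - r) = near_members \<C> x (t + r)" and "dist x y \<le> r"
  shows "near_members \<C> y t = near_members \<C> x (t - r)"
proof
  show "near_members \<C> y t \<subseteq> near_members \<C> x (t - r)"
    unfolding plateau
  proof
    fix C assume "C \<in> near_members \<C> y t"
    then obtain c where "C \<in> \<C>" "c \<in> C" "dist y c \<le> t" unfolding near_members_def by auto
    moreover have "dist x c \<le> dist x y + dist y c" by (rule dist_triangle)
    ultimately show "C \<in> near_members \<C> x (t + r)"
      using assms(2) unfolding near_members_def by force
  qed
  show "near_members \<C> x (t - r) \<subseteq> near_members \<C> y t"
  proof
    fix C assume "C \<in> near_members \<C> x (t - r)"
    then obtain c where "C \<in> \<C>" "c \<in> C" "dist x c \<le> t - r" unfolding near_members_def by auto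
    moreover have "dist y c \<le> dist x y + dist x c" by (metis dist_commute dist_triangle)
    ultimately show "C \<in> near_members \<C> y t"
      using assms(2) unfolding near_members_def by force
  qed
qed

lemma cball_subset_level_class:
  assumes "near_members \<C> x (t - r) = near_members \<C> x (t + r)" "r \<ge> 0"
  shows "cball x r \<inter> X \<subseteq> level_class X \<C> t x"
  using near_members_eq_of_plateau[OF assms(1)] \<open>r \<ge> 0\<close>
  unfolding level_class_def by auto

lemma exists_padded_level:
  assumes "\<forall>C\<in>\<C>. C \<subseteq> X" "X \<subseteq> \<Union>\<C>" "x \<in> X"
    and mult: "\<forall>A\<subseteq>X. diam_le A s \<longrightarrow>
            finite {C\<in>\<C>. C \<inter> A \<noteq> {}} \<and> card {C\<in>\<C>. C \<inter> A \<noteq> {}} \<le> d + 1"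
    and "\<delta> > 0" "4 * (real d + 1) * \<delta> \<le> s"
  shows "\<exists>j\<le>d. cball x \<delta> \<inter> X \<subseteq> level_class X \<C> ((2 * real j + 1) * \<delta>) x"
proof -
  define N where "N i = near_members \<C> x (2 * real i * \<delta>)" for i
  have N_bound: "finite (N i) \<and> card (N i) \<le> d + 1" if "i \<le> Suc d" for i
  proof -
    have "real i * \<delta> \<le> (real d + 1) * \<delta>"
      using that \<open>\<delta> > 0\<close> by (intro mult_right_mono) auto
    hence "2 * (2 * real i * \<delta>) \<le> s"
      using \<open>4 * (real d + 1) * \<delta> \<le> s\<close> by linarith
    thus ?thesis unfolding N_def using finite_near_members[OF assms(1) mult] by blast
  qed
  have N_mono: "N i \<subseteq> N (Suc i)" for i
    unfolding N_def using \<open>\<delta> > 0\<close> by (intro near_members_mono) simp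
  have "\<exists>j\<le>d. card (N j) = card (N (Suc j))"
  proof (rule exists_plateau)
    show "card (N 0) \<ge> 1"
      using N_bound[of 0] near_members_nonempty[OF assms(2,3)]
      by (simp add: N_def Suc_le_eq card_gt_0_iff)
    show "card (N (Suc d)) \<le> d + 1" using N_bound by simp
    show "card (N i) \<le> card (N (Suc i))" if "i \<le> d" for i
      using N_bound[of "Suc i"] N_mono that by (intro card_mono) auto
  qed
  then obtain j where "j \<le> d" "card (N j) = card (N (Suc j))" by auto
  hence "N j = N (Suc j)" using card_subset_eq N_bound N_mono by (metis Suc_le_mono)
  hence "near_members \<C> x ((2 * real j + 1) * \<delta> - \<delta>) =
         near_members \<C> x ((2 * real j + 1) * \<delta> + \<delta>)"
    unfolding N_def by (simp add: algebra_simps)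
  with \<open>j \<le> d\<close> \<open>\<delta> > 0\<close> show ?thesis using cball_subset_level_class by fastforce
qed

lemma padded_decomposition_of_cover:
  fixes X :: "'a::metric_space set" and \<C> :: "'a set set"
  assumes cover: "\<forall>C\<in>\<C>. C \<subseteq> X \<and> diam_le C D" "X \<subseteq> \<Union>\<C>"
    and mult: "\<forall>A\<subseteq>X. diam_le A s \<longrightarrow>
            finite {C\<in>\<C>. C \<inter> A \<noteq> {}} \<and> card {C\<in>\<C>. C \<inter> A \<noteq> {}} \<le> d + 1"
    and "\<epsilon> * \<Delta> > 0"
    and "4 * (real d + 1) * (\<epsilon> * \<Delta>) \<le> s"
    and "D + 2 * (2 * real d + 1) * (\<epsilon> * \<Delta>) \<le> \<Delta>"
  shows "\<exists>M. stoch_decomp X M \<Delta> \<and> padded X M \<Delta> \<epsilon> (1 / (real d + 1))"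
proof -
  define \<delta> where "\<delta> = \<epsilon> * \<Delta>"
  have "\<delta> > 0" using assms(4) unfolding \<delta>_def .
  define P where "P j = level_partition X \<C> ((2 * real j + 1) * \<delta>)" for j :: nat
  define M where "M = uniform_count_measure (P ` {0..d})"
  have space_M: "space M = P ` {0..d}" "sets M = Pow (P ` {0..d})"
    unfolding M_def by (simp_all add: space_uniform_count_measure sets_uniform_count_measure)
  have diam_P: "\<forall>C\<in>P j. diam_le C \<Delta>" if "j \<le> d" for j
  proof
    fix C assume "C \<in> P j"
    then obtain y where "C = level_class X \<C> ((2 * real j + 1) * \<delta>) y"
      unfolding P_def level_partition_def by auto
    hence "diam_le C (D + 2 * ((2 * real j + 1) * \<delta>))"
      using diam_le_level_class[of \<C> D X] cover \<open>\<delta> > 0\<close> by simp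
    moreover have "(2 * real j + 1) * \<delta> \<le> (2 * real d + 1) * \<delta>"
      using that \<open>\<delta> > 0\<close> by (intro mult_right_mono) auto
    hence "D + 2 * ((2 * real j + 1) * \<delta>) \<le> \<Delta>"
      using assms(6) unfolding \<delta>_def by linarith
    ultimately show "diam_le C \<Delta>" by (rule diam_le_mono)
  qed
  have "stoch_decomp X M \<Delta>"
    unfolding stoch_decomp_def
  proof (intro conjI)
    show "prob_space M" unfolding M_def by (rule prob_space_uniform_count_measure) auto
    show "\<forall>Q\<in>space M. is_partition X Q"
      using space_M is_partition_level_partition unfolding P_def by auto
    show "AE Q in M. \<forall>C\<in>Q. diam_le C \<Delta>"
      using space_M diam_P by (intro AE_I2) auto
  qed
  moreover have "padded X M \<Delta> \<epsilon> (1 / (real d + 1))"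
    unfolding padded_def
  proof (intro ballI conjI)
    fix x assume "x \<in> X"
    let ?E = "{Q\<in>space M. cball x (\<epsilon> * \<Delta>) \<inter> X \<subseteq> part_of Q x}"
    show "?E \<in> sets M" using space_M by auto
    obtain j where "j \<le> d" "cball x \<delta> \<inter> X \<subseteq> level_class X \<C> ((2 * real j + 1) * \<delta>) x"
      using exists_padded_level[OF _ cover(2) \<open>x \<in> X\<close> mult \<open>\<delta> > 0\<close>] cover assms(5)
      unfolding \<delta>_def by blast
    hence "cball x (\<epsilon> * \<Delta>) \<inter> X \<subseteq> part_of (P j) x"
      using part_of_level_partition[OF \<open>x \<in> X\<close>] unfolding P_def \<delta>_def by simp
    hence "P j \<in> ?E" using space_M \<open>j \<le> d\<close> by auto
    moreover have "?E \<subseteq> P ` {0..d}" using space_M by auto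
    moreover have "card (P ` {0..d}) \<le> d + 1" using card_image_le[of "{0..d}" P] by simp
    ultimately have "1 / real (d + 1) \<le> measure M ?E"
      using measure_uniform_count_measure_ge[of "P ` {0..d}" ?E "d + 1"]
      unfolding M_def by blast
    thus "measure M ?E \<ge> 1 / (real d + 1)" by (simp add: add.commute)
  qed
  ultimately show ?thesis by blast
qed

lemma padding_parameters:
  fixes \<Delta> \<gamma> g :: real and d :: nat
  defines "\<epsilon> \<equiv> 1 / (100 * \<gamma> * (real d)^2)" and "s \<equiv> \<Delta> / (2 * \<gamma>)"
  assumes "\<gamma> \<ge> 1" "d \<ge> 1" "\<Delta> > 0" "g \<le> \<gamma>"
  shows "4 * (real d + 1) * (\<epsilon> * \<Delta>) \<le> s"
    and "g * s + 2 * (2 * real d + 1) * (\<epsilon> * \<Delta>) \<le> \<Delta>"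
proof -
  have d: "real d \<ge> 1" "real d \<le> (real d)^2"
    using assms(4) by (auto simp: power2_eq_square)
  have small: "4 * (x + 1) \<le> 50 * y" "2 * (2 * x + 1) \<le> 50 * y"
    if "1 \<le> x" "x \<le> y" for x y :: real
    using that by simp_all
  have "4 * (real d + 1) \<le> 50 * (real d)^2"
    using small(1) d by blast
  hence "4 * (real d + 1) * (\<epsilon> * \<Delta>) \<le> 50 * (real d)^2 * (\<epsilon> * \<Delta>)"
    using assms(3,5) unfolding \<epsilon>_def by (intro mult_right_mono) auto
  also have "\<dots> = s"
    using d assms(3) unfolding \<epsilon>_def s_def by (simp add: field_simps)
  finally show "4 * (real d + 1) * (\<epsilon> * \<Delta>) \<le> s" .
  have "(real d)^2 \<le> \<gamma> * (real d)^2"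
    using mult_right_mono[OF assms(3), of "(real d)^2"] by simp
  hence "2 * (2 * real d + 1) \<le> 50 * (\<gamma> * (real d)^2)"
    using small(2) d by (meson order_trans)
  hence "2 * (2 * real d + 1) * (\<epsilon> * \<Delta>) \<le> 50 * (\<gamma> * (real d)^2) * (\<epsilon> * \<Delta>)"
    using assms(3,5) unfolding \<epsilon>_def by (intro mult_right_mono) auto
  also have "\<dots> = \<Delta> / 2"
    using d assms(3) unfolding \<epsilon>_def by (simp add: field_simps)
  finally have "2 * (2 * real d + 1) * (\<epsilon> * \<Delta>) \<le> \<Delta> / 2" .
  moreover have "g * s \<le> \<Delta> / 2"
    using mult_right_mono[OF assms(6), of s] assms(3,5) unfolding s_def by simp
  ultimately show "g * s + 2 * (2 * real d + 1) * (\<epsilon> * \<Delta>) \<le> \<Delta>" by linarith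
qed

theorem lemma5p2:
  fixes X :: "'a::metric_space set" and d :: nat and \<gamma> :: real
  assumes "\<gamma> \<ge> 1" and "d \<ge> 1" and "nagata_const X d < ereal \<gamma>"
  shows "\<forall>k::int. \<exists>M :: 'a set set measure.
           stoch_decomp X M (2 powr k) \<and>
           padded X M (2 powr k) (1 / (100 * \<gamma> * (real d)^2)) (1 / (real d + 1))"
proof
  fix k :: int
  define \<Delta> :: real where "\<Delta> = 2 powr k"
  define s where "s = \<Delta> / (2 * \<gamma>)"
  have "\<Delta> > 0" "s > 0" using assms(1) unfolding \<Delta>_def s_def by simp_all
  obtain g where "nagata_dim_le X d g" "g < \<gamma>"
    using assms(3) unfolding nagata_const_def by (auto simp: INF_less_iff)
  then obtain \<C> :: "'a set set" where
    cover: "\<forall>C\<in>\<C>. C \<subseteq> X \<and> diam_le C (g * s)" "X \<subseteq> \<Union>\<C>" and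
    mult: "\<forall>A\<subseteq>X. diam_le A s \<longrightarrow>
            finite {C\<in>\<C>. C \<inter> A \<noteq> {}} \<and> card {C\<in>\<C>. C \<inter> A \<noteq> {}} \<le> d + 1"
    using \<open>s > 0\<close> unfolding nagata_dim_le_def by meson
  show "\<exists>M. stoch_decomp X M (2 powr k) \<and>
           padded X M (2 powr k) (1 / (100 * \<gamma> * (real d)^2)) (1 / (real d + 1))"
    unfolding \<Delta>_def[symmetric]
    using padded_decomposition_of_cover[OF cover mult]
      padding_parameters[OF assms(1,2) \<open>\<Delta> > 0\<close>, of g] \<open>g < \<gamma>\<close> \<open>\<Delta> > 0\<close> assms(1,2)
    unfolding s_def by simp
qed

end
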